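(* Let $(x^k)_{k\in\mathcal{K}}\in\mathcal{X}=\prod_{k\in\mathcal{K}}\mathcal{X}^k$. The following statements are equivalent: (a) $(x^k)$ is bilevel feasible; (b) $\sum_{k\in\mathcal{K}}c^\top x^k=g\bigl(\sum_{k\in\mathcal{K}}x^k_{\mathcal{A}_1}\bigr)$; (c) each $x^k$ is individually bilevel feasible, and $g\bigl(\sum_{k\in\mathcal{K}}x^k_{\mathcal{A}_1}\bigr)=\sum_{k\in\mathcal{K}}g^k(x^k_{\mathcal{A}_1})$; (d) there exists $t\ge0$ such that $f(t)=\sum_{k\in\mathcal{K}}\bigl(c^\top x^k+t^\top x^k_{\mathcal{A}_1}\bigr)$; (e) there exists $t\ge0$ such that $f^k(t)=c^\top x^k+t^\top x^k_{\mathcal{A}_1}$ for all $k\in\mathcal{K}$.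
   Context: Multi-commodity network pricing setting: $G=(\mathcal{V},\mathcal{A})$ directed graph with arc costs $c\ge0$, nonempty tolled arc set $\mathcal{A}_1\subsetneq\mathcal{A}$, $n=|\mathcal{A}_1|$, $N$ node–arc incidence matrix; finite set $\mathcal{K}$ of commodities, commodity $k$ having origin $o^k$ and destination $d^k$ connected by a path of arcs not in $\mathcal{A}_1$; $b^k_{o^k}=1$, $b^k_{d^k}=-1$, other entries $0$; $\mathcal{X}^k=\{x\in\mathbb{R}^{\mathcal{A}}: Nx=b^k,\ x\ge0\}$; $x_{\mathcal{A}_1}$ is the restriction of $x$ to $\mathcal{A}_1$. For $t\in\mathbb{R}^n$ let $f^k(t)=\min\{c^\top x+t^\top x_{\mathcal{A}_1}: x\in\mathcal{X}^k\}$ if $t\ge0$ and $f^k(t)=-\infty$ otherwise; $f=\sum_{k\in\mathcal{K}}f^k$; $g^k(w)=\sup_{t\in\mathbb{R}^n}\{f^k(t)-t^\top w\}$ and $g(w)=\sup_{t\in\mathbb{R}^n}\{f(t)-t^\top w\}$. A composed reaction $(x^k)\in\mathcal{X}$ is bilevel feasible when $\sum_k c^\top x^k=g(\sum_k x^k_{\mathcal{A}_1})$. A single $x^k\in\mathcal{X}^k$ is individually bilevel feasible when the hyperplane $\{(t,z): z=-c^\top x^k-t^\top x^k_{\mathcal{A}_1}\}$ supports $\operatorname{epi}(-f^k)$ (i.e. $\operatorname{epi}(-f^k)$ lies in $\{z\ge -c^\top x^k-t^\top x^k_{\mathcal{A}_1}\}$ and meets the hyperplane). *)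

theory Defs
  imports Complex_Main "HOL-Library.Extended_Real"
begin

text \<open>Vectors in R^A are functions 'a => real vanishing outside arcs; toll vectors in R^n
  (n = |A1|) are represented by functions 'a => real of which only the values on A1 matter.\<close>

record ('v,'a,'k) net =
  verts :: "'v set"
  arcs :: "'a set"
  tail :: "'a \<Rightarrow> 'v"
  head :: "'a \<Rightarrow> 'v"
  cost :: "'a \<Rightarrow> real"
  tolled :: "'a set"
  comms :: "'k set"
  orig :: "'k \<Rightarrow> 'v"
  dest :: "'k \<Rightarrow> 'v"

fun toll_free_walk :: "('v,'a,'k) net \<Rightarrow> 'v \<Rightarrow> 'a list \<Rightarrow> 'v \<Rightarrow> bool" where
  "toll_free_walk G u [] v \<longleftrightarrow> u = v"
| "toll_free_walk G u (a # p) v \<longleftrightarrow>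
     a \<in> arcs G - tolled G \<and> tail G a = u \<and> toll_free_walk G (head G a) p v"

definition pricing_instance :: "('v,'a,'k) net \<Rightarrow> bool" where
  "pricing_instance G \<longleftrightarrow>
     finite (verts G) \<and> finite (arcs G) \<and>
     (\<forall>a\<in>arcs G. tail G a \<in> verts G \<and> head G a \<in> verts G) \<and>
     (\<forall>a\<in>arcs G. 0 \<le> cost G a) \<and>
     tolled G \<noteq> {} \<and> tolled G \<subset> arcs G \<and>
     finite (comms G) \<and>
     (\<forall>k\<in>comms G. orig G k \<in> verts G \<and> dest G k \<in> verts G \<and> orig G k \<noteq> dest G k \<and>
        (\<exists>p. toll_free_walk G (orig G k) p (dest G k)))"

definition incidence :: "('v,'a,'k) net \<Rightarrow> 'v \<Rightarrow> 'a \<Rightarrow> real" where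
  "incidence G v a = (if tail G a = v then 1 else 0) - (if head G a = v then 1 else 0)"

definition demand_rhs :: "('v,'a,'k) net \<Rightarrow> 'k \<Rightarrow> 'v \<Rightarrow> real" where
  "demand_rhs G k v = (if v = orig G k then 1 else if v = dest G k then -1 else 0)"

definition flows :: "('v,'a,'k) net \<Rightarrow> 'k \<Rightarrow> ('a \<Rightarrow> real) set" where
  "flows G k = {x. (\<forall>a. a \<notin> arcs G \<longrightarrow> x a = 0) \<and>
                   (\<forall>v\<in>verts G. (\<Sum>a\<in>arcs G. incidence G v a * x a) = demand_rhs G k v) \<and>
                   (\<forall>a\<in>arcs G. 0 \<le> x a)}"

definition ccost :: "('v,'a,'k) net \<Rightarrow> ('a \<Rightarrow> real) \<Rightarrow> real" where
  "ccost G x = (\<Sum>a\<in>arcs G. cost G a * x a)"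

definition toll :: "('v,'a,'k) net \<Rightarrow> ('a \<Rightarrow> real) \<Rightarrow> ('a \<Rightarrow> real) \<Rightarrow> real" where
  "toll G t x = (\<Sum>a\<in>tolled G. t a * x a)"

definition nonneg_toll :: "('v,'a,'k) net \<Rightarrow> ('a \<Rightarrow> real) \<Rightarrow> bool" where
  "nonneg_toll G t \<longleftrightarrow> (\<forall>a\<in>tolled G. 0 \<le> t a)"

text \<open>f^k (the minimum, written as an infimum in the extended reals), f, g^k, g.\<close>
definition fk :: "('v,'a,'k) net \<Rightarrow> 'k \<Rightarrow> ('a \<Rightarrow> real) \<Rightarrow> ereal" where
  "fk G k t = (if nonneg_toll G t
               then (INF x\<in>flows G k. ereal (ccost G x + toll G t x))
               else -\<infinity>)"

definition ff :: "('v,'a,'k) net \<Rightarrow> ('a \<Rightarrow> real) \<Rightarrow> ereal" where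
  "ff G t = (\<Sum>k\<in>comms G. fk G k t)"

definition gk :: "('v,'a,'k) net \<Rightarrow> 'k \<Rightarrow> ('a \<Rightarrow> real) \<Rightarrow> ereal" where
  "gk G k w = (SUP t. fk G k t - ereal (toll G t w))"

definition gg :: "('v,'a,'k) net \<Rightarrow> ('a \<Rightarrow> real) \<Rightarrow> ereal" where
  "gg G w = (SUP t. ff G t - ereal (toll G t w))"

definition aggr :: "('v,'a,'k) net \<Rightarrow> ('k \<Rightarrow> 'a \<Rightarrow> real) \<Rightarrow> 'a \<Rightarrow> real" where
  "aggr G x = (\<lambda>a. \<Sum>k\<in>comms G. x k a)"

definition bilevel_feasible :: "('v,'a,'k) net \<Rightarrow> ('k \<Rightarrow> 'a \<Rightarrow> real) \<Rightarrow> bool" where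
  "bilevel_feasible G x \<longleftrightarrow>
     (\<forall>k\<in>comms G. x k \<in> flows G k) \<and>
     ereal (\<Sum>k\<in>comms G. ccost G (x k)) = gg G (aggr G x)"

definition epi_neg_fk :: "('v,'a,'k) net \<Rightarrow> 'k \<Rightarrow> (('a \<Rightarrow> real) \<times> real) set" where
  "epi_neg_fk G k = {(t, z). - fk G k t \<le> ereal z}"

definition indiv_bilevel_feasible :: "('v,'a,'k) net \<Rightarrow> 'k \<Rightarrow> ('a \<Rightarrow> real) \<Rightarrow> bool" where
  "indiv_bilevel_feasible G k y \<longleftrightarrow>
     y \<in> flows G k \<and>
     epi_neg_fk G k \<subseteq> {(t, z). z \<ge> - ccost G y - toll G t y} \<and>
     epi_neg_fk G k \<inter> {(t, z). z = - ccost G y - toll G t y} \<noteq> {}"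

end

theory Submission
  imports Defs
begin

text \<open>Weak duality gives \<open>g(w) \<le> \<Sum>\<^sub>k c\<^sup>T x\<^sup>k\<close> for the aggregate \<open>w\<close> of any composed reaction, with
  equality witnessed by a toll \<open>t\<close> exactly when \<open>f(t) = \<Sum>\<^sub>k (c\<^sup>T x\<^sup>k + t\<^sup>T x\<^sup>k)\<close>, i.e. when every
  \<open>x\<^sup>k\<close> is an optimal reaction to \<open>t\<close>. Everything therefore hinges on the supremum defining \<open>g\<close>
  being attained. Each \<open>f\<^sup>k(t)\<close> is the minimum over the finitely many vertices of \<open>X\<^sup>k\<close>, which do
  not depend on \<open>t\<close>, so \<open>sup\<^sub>t f(t) - t\<^sup>T w\<close> is a finite linear program; it is bounded by weak
  duality, and a bounded linear program over a pointed polyhedron attains its optimum at a basic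
  solution: the ratio test of the simplex method moves any feasible point to a basic one without
  decreasing the objective.\<close>

section \<open>Linear programs over finitely supported vectors\<close>

definition supported_on :: "'i set \<Rightarrow> ('i \<Rightarrow> real) \<Rightarrow> bool" where
  "supported_on I u \<longleftrightarrow> (\<forall>i. i \<notin> I \<longrightarrow> u i = 0)"

definition dot_on :: "'i set \<Rightarrow> ('i \<Rightarrow> real) \<Rightarrow> ('i \<Rightarrow> real) \<Rightarrow> real" where
  "dot_on I h u = (\<Sum>i\<in>I. h i * u i)"

definition lp_feasible :: "'i set \<Rightarrow> (('i \<Rightarrow> real) \<times> real) set \<Rightarrow> ('i \<Rightarrow> real) \<Rightarrow> bool" where
  "lp_feasible I J u \<longleftrightarrow> supported_on I u \<and> (\<forall>(h, r)\<in>J. dot_on I h u \<le> r)"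

definition lp_active :: "'i set \<Rightarrow> (('i \<Rightarrow> real) \<times> real) set \<Rightarrow> ('i \<Rightarrow> real) \<Rightarrow> (('i \<Rightarrow> real) \<times> real) set" where
  "lp_active I J u = {(h, r)\<in>J. dot_on I h u = r}"

definition lp_pointed :: "'i set \<Rightarrow> (('i \<Rightarrow> real) \<times> real) set \<Rightarrow> bool" where
  "lp_pointed I J \<longleftrightarrow> (\<forall>d. supported_on I d \<and> (\<forall>(h, r)\<in>J. dot_on I h d = 0) \<longrightarrow> d = (\<lambda>i. 0))"

definition lp_basic :: "'i set \<Rightarrow> (('i \<Rightarrow> real) \<times> real) set \<Rightarrow> ('i \<Rightarrow> real) \<Rightarrow> bool" where
  "lp_basic I J u \<longleftrightarrow> lp_pointed I (lp_active I J u)"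

lemma dot_on_add_scaled: "dot_on I h (\<lambda>i. u i + s * e i) = dot_on I h u + s * dot_on I h e"
  unfolding dot_on_def by (simp add: sum.distrib sum_distrib_left algebra_simps)

lemma dot_on_diff: "dot_on I h (\<lambda>i. u i - v i) = dot_on I h u - dot_on I h v"
  unfolding dot_on_def by (simp add: sum_subtractf algebra_simps)

lemma dot_on_uminus: "dot_on I h (\<lambda>i. - u i) = - dot_on I h u"
  unfolding dot_on_def by (simp add: sum_negf)

lemma dot_on_uminus_left: "dot_on I (\<lambda>i. - h i) u = - dot_on I h u"
  unfolding dot_on_def by (simp add: sum_negf)

lemma dot_on_indicator:
  assumes "finite I" "a \<in> I"
  shows "dot_on I (\<lambda>i. if i = a then c else 0) u = c * u a"
proof -
  have "dot_on I (\<lambda>i. if i = a then c else 0) u = (\<Sum>i\<in>I. if i = a then c * u i else 0)"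
    unfolding dot_on_def by (rule sum.cong) auto
  then show ?thesis using assms by simp
qed

lemma finite_lp_basic_feasible:
  assumes "finite J"
  shows "finite {u. lp_feasible I J u \<and> lp_basic I J u}" (is "finite ?S")
proof -
  have "inj_on (lp_active I J) ?S"
  proof (rule inj_onI)
    fix u v assume u: "u \<in> ?S" and v: "v \<in> ?S" and eq: "lp_active I J u = lp_active I J v"
    have "supported_on I (\<lambda>i. u i - v i)"
      using u v by (simp add: lp_feasible_def supported_on_def)
    moreover have "\<forall>(h, r)\<in>lp_active I J u. dot_on I h (\<lambda>i. u i - v i) = 0"
      using eq by (auto simp: lp_active_def dot_on_diff dest: equalityD1)
    ultimately have "(\<lambda>i. u i - v i) = (\<lambda>i. 0)"
      using u by (simp add: lp_basic_def lp_pointed_def)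
    then show "u = v" by (simp add: fun_eq_iff)
  qed
  moreover have "lp_active I J ` ?S \<subseteq> Pow J" by (auto simp: lp_active_def)
  ultimately show ?thesis using assms inj_on_finite by blast
qed

lemma lp_recession_direction_nonascending:
  assumes bounded: "\<And>u. lp_feasible I J u \<Longrightarrow> dot_on I p u \<le> B"
    and u: "lp_feasible I J u" and e: "supported_on I e"
    and recession: "\<forall>(h, r)\<in>J. dot_on I h e \<le> 0"
  shows "dot_on I p e \<le> 0"
proof (rule ccontr)
  assume "\<not> ?thesis"
  then have pos: "0 < dot_on I p e" by simp
  define s where "s = (B - dot_on I p u + 1) / dot_on I p e"
  have "0 \<le> s" using bounded[OF u] pos by (simp add: s_def)
  have "dot_on I h u + s * dot_on I h e \<le> r" if "(h, r) \<in> J" for h r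
    using u recession that \<open>0 \<le> s\<close> mult_nonneg_nonpos[of s "dot_on I h e"]
    by (fastforce simp: lp_feasible_def)
  then have "lp_feasible I J (\<lambda>i. u i + s * e i)"
    using u e by (auto simp: lp_feasible_def supported_on_def dot_on_add_scaled)
  then have "dot_on I p u + s * dot_on I p e \<le> B"
    using bounded dot_on_add_scaled by metis
  moreover have "dot_on I p u + s * dot_on I p e = B + 1" using pos by (simp add: s_def)
  ultimately show False by simp
qed

lemma lp_ascent_direction:
  assumes pointed: "lp_pointed I J"
    and bounded: "\<And>u. lp_feasible I J u \<Longrightarrow> dot_on I p u \<le> B"
    and u: "lp_feasible I J u" and not_basic: "\<not> lp_basic I J u"
  obtains e where "supported_on I e" "\<forall>(h, r)\<in>lp_active I J u. dot_on I h e = 0"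
    "0 \<le> dot_on I p e" "\<exists>(h, r)\<in>J. 0 < dot_on I h e"
proof -
  obtain d where d: "supported_on I d" "\<forall>(h, r)\<in>lp_active I J u. dot_on I h d = 0"
    and "d \<noteq> (\<lambda>i. 0)"
    using not_basic unfolding lp_basic_def lp_pointed_def by blast
  with pointed obtain h0 r0 where h0: "(h0, r0) \<in> J" "dot_on I h0 d \<noteq> 0"
    unfolding lp_pointed_def by blast
  \<comment> \<open>One of \<open>\<pm>d\<close> does not decrease the objective. If it increases no constraint, it is a
    recession direction, so the objective is constant along it and its negative increases \<open>h0\<close>.\<close>
  have "\<exists>e. supported_on I e \<and> (\<forall>(h, r)\<in>lp_active I J u. dot_on I h e = 0) \<and>
      0 \<le> dot_on I p e \<and> (\<exists>(h, r)\<in>J. 0 < dot_on I h e)"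
    if e: "supported_on I e" "\<forall>(h, r)\<in>lp_active I J u. dot_on I h e = 0"
      "0 \<le> dot_on I p e" "dot_on I h0 e \<noteq> 0" for e
  proof (cases "\<exists>(h, r)\<in>J. 0 < dot_on I h e")
    case True
    then show ?thesis using e by blast
  next
    case False
    then have "\<forall>(h, r)\<in>J. dot_on I h e \<le> 0" by auto
    then have "dot_on I p e = 0" and "dot_on I h0 e < 0"
      using lp_recession_direction_nonascending[OF bounded u e(1)] e(3,4) h0(1)
      by (force, fastforce)
    then show ?thesis using e(1,2) h0(1)
      by (intro exI[of _ "\<lambda>i. - e i"]) (auto simp: dot_on_uminus supported_on_def)
  qed
  moreover have "supported_on I (\<lambda>i. - d i)" "dot_on I h0 (\<lambda>i. - d i) \<noteq> 0"
    "\<forall>(h, r)\<in>lp_active I J u. dot_on I h (\<lambda>i. - d i) = 0"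
    using d h0 by (auto simp: supported_on_def dot_on_uminus)
  moreover have "0 \<le> dot_on I p d \<or> 0 \<le> dot_on I p (\<lambda>i. - d i)"
    by (auto simp: dot_on_uminus)
  ultimately show ?thesis
    using that d h0(2) by blast
qed

lemma lp_ratio_test:
  assumes J: "finite J" and u: "lp_feasible I J u" and e: "supported_on I e"
    and orth: "\<forall>(h, r)\<in>lp_active I J u. dot_on I h e = 0"
    and ascent: "0 \<le> dot_on I p e" and leaving: "\<exists>(h, r)\<in>J. 0 < dot_on I h e"
  obtains u' where "lp_feasible I J u'" "dot_on I p u \<le> dot_on I p u'"
    "lp_active I J u \<subset> lp_active I J u'"
proof -
  define P where "P = {(h, r)\<in>J. 0 < dot_on I h e}"
  define ratio where "ratio = (\<lambda>(h, r). (r - dot_on I h u) / dot_on I h e)"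
  define s where "s = Min (ratio ` P)"
  define u' where "u' = (\<lambda>i. u i + s * e i)"
  have "finite P" using J by (rule rev_finite_subset) (auto simp: P_def)
  have "P \<noteq> {}" using leaving by (auto simp: P_def)
  have s_le: "s \<le> ratio hr" if "hr \<in> P" for hr
    unfolding s_def using \<open>finite P\<close> that by (intro Min_le) auto
  obtain h1 r1 where h1: "(h1, r1) \<in> P" "ratio (h1, r1) = s"
    using Min_in[of "ratio ` P"] \<open>finite P\<close> \<open>P \<noteq> {}\<close> unfolding s_def by fastforce
  have ratio_nonneg: "0 \<le> ratio hr" if "hr \<in> P" for hr
    using that u by (auto simp: P_def ratio_def lp_feasible_def)
  have "0 \<le> s" using ratio_nonneg[OF h1(1)] h1(2) by simp
  have "dot_on I h u + s * dot_on I h e \<le> r" if hr: "(h, r) \<in> J" for h r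
  proof (cases "0 < dot_on I h e")
    case True
    then have "s \<le> (r - dot_on I h u) / dot_on I h e"
      using s_le[of "(h, r)"] hr by (simp add: P_def ratio_def)
    then show ?thesis using True by (simp add: pos_le_divide_eq)
  next
    case False
    then have "s * dot_on I h e \<le> 0"
      using \<open>0 \<le> s\<close> by (simp add: mult_nonneg_nonpos)
    then show ?thesis using u hr by (fastforce simp: lp_feasible_def)
  qed
  then have "lp_feasible I J u'"
    using u e by (auto simp: lp_feasible_def supported_on_def dot_on_add_scaled u'_def)
  moreover have "dot_on I p u \<le> dot_on I p u'"
    using \<open>0 \<le> s\<close> ascent by (simp add: u'_def dot_on_add_scaled)
  moreover have "lp_active I J u \<subseteq> lp_active I J u'"
    using orth by (auto simp: lp_active_def u'_def dot_on_add_scaled)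
  moreover have "(h1, r1) \<in> lp_active I J u' - lp_active I J u"
    using h1 orth by (auto simp: P_def ratio_def lp_active_def u'_def dot_on_add_scaled)
  ultimately show ?thesis using that by blast
qed

lemma lp_basic_feasible_dominates:
  assumes J: "finite J" and pointed: "lp_pointed I J"
    and bounded: "\<And>u. lp_feasible I J u \<Longrightarrow> dot_on I p u \<le> B"
    and u: "lp_feasible I J u"
  shows "\<exists>u'. lp_feasible I J u' \<and> lp_basic I J u' \<and> dot_on I p u \<le> dot_on I p u'"
  using u
proof (induction "card (J - lp_active I J u)" arbitrary: u rule: less_induct)
  case less
  show ?case
  proof (cases "lp_basic I J u")
    case True
    then show ?thesis using less.prems by blast
  next
    case False
    obtain e where "supported_on I e" "\<forall>(h, r)\<in>lp_active I J u. dot_on I h e = 0"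
      "0 \<le> dot_on I p e" "\<exists>(h, r)\<in>J. 0 < dot_on I h e"
      using lp_ascent_direction[OF pointed bounded less.prems False] .
    then obtain u' where u': "lp_feasible I J u'" "dot_on I p u \<le> dot_on I p u'"
      "lp_active I J u \<subset> lp_active I J u'"
      using lp_ratio_test[OF J less.prems] by blast
    have "J - lp_active I J u' \<subset> J - lp_active I J u"
      using u'(3) by (auto simp: lp_active_def)
    then have "card (J - lp_active I J u') < card (J - lp_active I J u)"
      using J by (meson finite_Diff psubset_card_mono)
    then show ?thesis using less.hyps u' by fastforce
  qed
qed

lemma lp_max_attained:
  assumes J: "finite J" and pointed: "lp_pointed I J"
    and bounded: "\<And>u. lp_feasible I J u \<Longrightarrow> dot_on I p u \<le> B"
    and u0: "lp_feasible I J u0"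
  obtains u where "lp_feasible I J u" "\<And>v. lp_feasible I J v \<Longrightarrow> dot_on I p v \<le> dot_on I p u"
proof -
  let ?S = "{u. lp_feasible I J u \<and> lp_basic I J u}"
  have dominated: "\<exists>u'\<in>?S. dot_on I p v \<le> dot_on I p u'" if "lp_feasible I J v" for v
    using lp_basic_feasible_dominates[OF J pointed bounded that] by blast
  have "finite ?S" "?S \<noteq> {}"
    using finite_lp_basic_feasible[OF J] dominated[OF u0] by auto
  then obtain u where u: "u \<in> ?S" "dot_on I p u = Max (dot_on I p ` ?S)"
    using Max_in[of "dot_on I p ` ?S"] by (auto simp del: Max_in)
  show ?thesis
  proof (rule that)
    show "lp_feasible I J u" using u by simp
    fix v assume "lp_feasible I J v"
    then obtain u' where "u' \<in> ?S" "dot_on I p v \<le> dot_on I p u'" using dominated by blast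
    moreover have "dot_on I p u' \<le> Max (dot_on I p ` ?S)"
      using \<open>finite ?S\<close> \<open>u' \<in> ?S\<close> by (intro Max_ge) auto
    ultimately show "dot_on I p v \<le> dot_on I p u" using u(2) by simp
  qed
qed

section \<open>Vertex flows and the commodities' value functions\<close>

definition flow_constraints :: "('v,'a,'k) net \<Rightarrow> 'k \<Rightarrow> (('a \<Rightarrow> real) \<times> real) set" where
  "flow_constraints G k =
     (\<lambda>v. (incidence G v, demand_rhs G k v)) ` verts G
   \<union> (\<lambda>v. (\<lambda>a. - incidence G v a, - demand_rhs G k v)) ` verts G
   \<union> (\<lambda>a. (\<lambda>a'. if a' = a then -1 else 0, 0)) ` arcs G"

definition vertex_flows :: "('v,'a,'k) net \<Rightarrow> 'k \<Rightarrow> ('a \<Rightarrow> real) set" where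
  "vertex_flows G k = {y. lp_feasible (arcs G) (flow_constraints G k) y \<and>
                          lp_basic (arcs G) (flow_constraints G k) y}"

lemma finite_flow_constraints: "pricing_instance G \<Longrightarrow> finite (flow_constraints G k)"
  unfolding flow_constraints_def pricing_instance_def by auto

lemma lp_feasible_flow_constraints_iff:
  assumes "pricing_instance G"
  shows "lp_feasible (arcs G) (flow_constraints G k) y \<longleftrightarrow> y \<in> flows G k"
proof -
  have "finite (arcs G)" using assms by (simp add: pricing_instance_def)
  then show ?thesis
    unfolding lp_feasible_def flow_constraints_def flows_def supported_on_def ball_Un
    by (auto simp: dot_on_indicator dot_on_uminus_left dot_on_def[symmetric] dest!: ball_imageD
        intro: order.antisym)
qed

lemma finite_vertex_flows: "pricing_instance G \<Longrightarrow> finite (vertex_flows G k)"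
  unfolding vertex_flows_def by (intro finite_lp_basic_feasible finite_flow_constraints)

lemma vertex_flows_subset_flows: "pricing_instance G \<Longrightarrow> vertex_flows G k \<subseteq> flows G k"
  by (auto simp: vertex_flows_def lp_feasible_flow_constraints_iff)

lemma route_cost_nonneg:
  assumes "pricing_instance G" "y \<in> flows G k" "nonneg_toll G t"
  shows "0 \<le> ccost G y + toll G t y"
proof -
  have "tolled G \<subseteq> arcs G" using assms(1) by (auto simp: pricing_instance_def)
  then show ?thesis
    using assms unfolding ccost_def toll_def pricing_instance_def flows_def nonneg_toll_def
    by (intro add_nonneg_nonneg sum_nonneg) auto
qed

lemma dot_on_route_cost:
  assumes "pricing_instance G"
  shows "dot_on (arcs G) (\<lambda>a. - (cost G a + (if a \<in> tolled G then t a else 0))) y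
    = - (ccost G y + toll G t y)"
proof -
  have "finite (arcs G)" "tolled G \<subseteq> arcs G" using assms by (auto simp: pricing_instance_def)
  then have "(\<Sum>a\<in>arcs G. (if a \<in> tolled G then t a else 0) * y a) = toll G t y"
    unfolding toll_def by (intro sum.mono_neutral_cong_right) auto
  moreover have "dot_on (arcs G) (\<lambda>a. - (cost G a + (if a \<in> tolled G then t a else 0))) y
    = - (ccost G y + (\<Sum>a\<in>arcs G. (if a \<in> tolled G then t a else 0) * y a))"
    unfolding dot_on_def ccost_def by (simp add: left_diff_distrib sum_subtractf sum_negf)
  ultimately show ?thesis by simp
qed

lemma vertex_flow_dominates:
  assumes inst: "pricing_instance G" and t: "nonneg_toll G t" and y: "y \<in> flows G k"
  obtains y' where "y' \<in> vertex_flows G k" "ccost G y' + toll G t y' \<le> ccost G y + toll G t y"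
proof -
  have pointed: "lp_pointed (arcs G) (flow_constraints G k)"
    unfolding lp_pointed_def
  proof (intro allI impI, elim conjE)
    fix d assume d: "supported_on (arcs G) d"
      "\<forall>(h, r)\<in>flow_constraints G k. dot_on (arcs G) h d = 0"
    have "finite (arcs G)" using inst by (simp add: pricing_instance_def)
    have "d a = 0" if a: "a \<in> arcs G" for a
    proof -
      have "(\<lambda>a'. if a' = a then -1 else 0, 0) \<in> flow_constraints G k"
        using a by (simp add: flow_constraints_def)
      then have "dot_on (arcs G) (\<lambda>a'. if a' = a then -1 else 0) d = 0" using d(2) by fastforce
      then show ?thesis using \<open>finite (arcs G)\<close> a by (simp add: dot_on_indicator)
    qed
    then show "d = (\<lambda>a. 0)" using d(1) by (auto simp: supported_on_def)
  qed
  have "dot_on (arcs G) (\<lambda>a. - (cost G a + (if a \<in> tolled G then t a else 0))) u \<le> 0"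
    if "lp_feasible (arcs G) (flow_constraints G k) u" for u
    using that route_cost_nonneg[OF inst _ t]
    unfolding dot_on_route_cost[OF inst] lp_feasible_flow_constraints_iff[OF inst] by force
  from lp_basic_feasible_dominates[OF finite_flow_constraints[OF inst] pointed this] y
  obtain y' where "y' \<in> flows G k" "lp_basic (arcs G) (flow_constraints G k) y'"
    "- (ccost G y + toll G t y) \<le> - (ccost G y' + toll G t y')"
    unfolding dot_on_route_cost[OF inst] lp_feasible_flow_constraints_iff[OF inst] by blast
  then show ?thesis
    using that by (simp add: vertex_flows_def lp_feasible_flow_constraints_iff[OF inst])
qed

lemma vertex_flows_nonempty:
  assumes "pricing_instance G" "y \<in> flows G k"
  shows "vertex_flows G k \<noteq> {}"
proof -
  have "nonneg_toll G (\<lambda>a. 0)" by (simp add: nonneg_toll_def)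
  then show ?thesis using vertex_flow_dominates[OF assms(1) _ assms(2)] by blast
qed

definition min_route_cost :: "('v,'a,'k) net \<Rightarrow> 'k \<Rightarrow> ('a \<Rightarrow> real) \<Rightarrow> real" where
  "min_route_cost G k t = Min ((\<lambda>y. ccost G y + toll G t y) ` vertex_flows G k)"

lemma min_route_cost_le:
  assumes inst: "pricing_instance G" and t: "nonneg_toll G t" and y: "y \<in> flows G k"
  shows "min_route_cost G k t \<le> ccost G y + toll G t y"
proof -
  obtain y' where "y' \<in> vertex_flows G k" "ccost G y' + toll G t y' \<le> ccost G y + toll G t y"
    using vertex_flow_dominates[OF inst t y] .
  moreover from this(1) have "min_route_cost G k t \<le> ccost G y' + toll G t y'"
    unfolding min_route_cost_def using finite_vertex_flows[OF inst] by (intro Min_le) auto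
  ultimately show ?thesis by simp
qed

lemma min_route_cost_attained:
  assumes "pricing_instance G" "vertex_flows G k \<noteq> {}"
  obtains y where "y \<in> vertex_flows G k" "min_route_cost G k t = ccost G y + toll G t y"
proof -
  have "min_route_cost G k t \<in> (\<lambda>y. ccost G y + toll G t y) ` vertex_flows G k"
    unfolding min_route_cost_def using finite_vertex_flows[OF assms(1)] assms(2) by (intro Min_in) auto
  then show ?thesis using that by blast
qed

lemma fk_eq_min_route_cost:
  assumes inst: "pricing_instance G" and t: "nonneg_toll G t" and y: "y \<in> flows G k"
  shows "fk G k t = ereal (min_route_cost G k t)"
proof -
  obtain y' where y': "y' \<in> vertex_flows G k" "min_route_cost G k t = ccost G y' + toll G t y'"
    using min_route_cost_attained[OF inst vertex_flows_nonempty[OF inst y]] by blast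
  have "(INF y\<in>flows G k. ereal (ccost G y + toll G t y)) = ereal (min_route_cost G k t)"
  proof (rule order.antisym)
    show "(INF y\<in>flows G k. ereal (ccost G y + toll G t y)) \<le> ereal (min_route_cost G k t)"
      using y' vertex_flows_subset_flows[OF inst] by (auto intro: INF_lower2)
    show "ereal (min_route_cost G k t) \<le> (INF y\<in>flows G k. ereal (ccost G y + toll G t y))"
      using min_route_cost_le[OF inst t] by (auto intro: INF_greatest)
  qed
  then show ?thesis using t by (simp add: fk_def)
qed

section \<open>Attainment of the dual supremum\<close>

lemma toll_aggr: "toll G t (aggr G x) = (\<Sum>k\<in>comms G. toll G t (x k))"
  unfolding toll_def aggr_def by (simp add: sum_distrib_left sum.swap[of _ "tolled G"])

lemma dot_on_Plus:
  assumes "finite C" "finite T"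
  shows "dot_on (C <+> T) h u = dot_on C (h \<circ> Inl) (u \<circ> Inl) + dot_on T (h \<circ> Inr) (u \<circ> Inr)"
  using assms by (simp add: dot_on_def sum.Plus)

text \<open>A point \<open>u\<close> has commodity components \<open>u (Inl k)\<close> and tolls \<open>t = u \<circ> Inr\<close>; the constraints
  say \<open>t \<ge> 0\<close> and \<open>u (Inl k) \<le> c\<^sup>T y + t\<^sup>T y\<close> for every vertex \<open>y\<close> of \<open>X\<^sup>k\<close>, so the largest
  admissible \<open>u (Inl k)\<close> is \<open>f\<^sup>k(t)\<close>.\<close>

definition dual_constraints :: "('v,'a,'k) net \<Rightarrow> (('k + 'a \<Rightarrow> real) \<times> real) set" where
  "dual_constraints G =
     (\<lambda>a. (\<lambda>i. if i = Inr a then -1 else 0, 0)) ` tolled G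
   \<union> (\<lambda>(k, y). (\<lambda>i. case i of Inl k' \<Rightarrow> if k' = k then 1 else 0 | Inr a \<Rightarrow> - y a, ccost G y))
       ` (SIGMA k:comms G. vertex_flows G k)"

lemma finite_comms_tolled:
  assumes "pricing_instance G"
  shows "finite (comms G)" "finite (tolled G)"
  using assms finite_subset[of "tolled G" "arcs G"] by (auto simp: pricing_instance_def)

lemma dot_on_dual_toll_constraint:
  assumes "pricing_instance G" "a \<in> tolled G"
  shows "dot_on (comms G <+> tolled G) (\<lambda>i. if i = Inr a then -1 else 0) u = - u (Inr a)"
  using assms finite_comms_tolled[OF assms(1)]
  by (simp add: dot_on_Plus comp_def dot_on_indicator) (simp add: dot_on_def)

lemma dot_on_dual_route_constraint:
  assumes "pricing_instance G" "k \<in> comms G"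
  shows "dot_on (comms G <+> tolled G)
      (\<lambda>i. case i of Inl k' \<Rightarrow> if k' = k then 1 else 0 | Inr a \<Rightarrow> - y a) u
    = u (Inl k) - toll G (u \<circ> Inr) y"
  using assms finite_comms_tolled[OF assms(1)]
  by (simp add: dot_on_Plus comp_def dot_on_indicator)
    (simp add: dot_on_def toll_def sum_negf mult.commute)

lemma lp_feasible_dual_constraints_iff:
  assumes inst: "pricing_instance G"
  shows "lp_feasible (comms G <+> tolled G) (dual_constraints G) u \<longleftrightarrow>
    supported_on (comms G <+> tolled G) u \<and> nonneg_toll G (u \<circ> Inr) \<and>
    (\<forall>k\<in>comms G. \<forall>y\<in>vertex_flows G k. u (Inl k) \<le> ccost G y + toll G (u \<circ> Inr) y)"
  unfolding lp_feasible_def dual_constraints_def ball_Un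
  by (auto simp: dot_on_dual_toll_constraint[OF inst] dot_on_dual_route_constraint[OF inst]
      nonneg_toll_def algebra_simps)

lemma lp_pointed_dual_constraints:
  assumes inst: "pricing_instance G" and vertices: "\<forall>k\<in>comms G. vertex_flows G k \<noteq> {}"
  shows "lp_pointed (comms G <+> tolled G) (dual_constraints G)"
  unfolding lp_pointed_def
proof (intro allI impI, elim conjE)
  fix d assume d: "supported_on (comms G <+> tolled G) d"
    "\<forall>(h, r)\<in>dual_constraints G. dot_on (comms G <+> tolled G) h d = 0"
  then have orth: "dot_on (comms G <+> tolled G) h d = 0" if "(h, r) \<in> dual_constraints G" for h r
    using that by auto
  have toll_zero: "d (Inr a) = 0" if a: "a \<in> tolled G" for a
  proof -
    have "(\<lambda>i. if i = Inr a then -1 else 0, 0) \<in> dual_constraints G"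
      using a by (simp add: dual_constraints_def)
    then show ?thesis using orth dot_on_dual_toll_constraint[OF inst a] by fastforce
  qed
  have "d (Inl k) = 0" if k: "k \<in> comms G" for k
  proof -
    obtain y where y: "y \<in> vertex_flows G k" using vertices k by blast
    then have "((\<lambda>i. case i of Inl k' \<Rightarrow> if k' = k then 1 else 0 | Inr a \<Rightarrow> - y a), ccost G y)
        \<in> dual_constraints G"
      using k unfolding dual_constraints_def by (intro UnI2 image_eqI[where x = "(k, y)"]) auto
    then have "d (Inl k) = toll G (d \<circ> Inr) y"
      using orth dot_on_dual_route_constraint[OF inst k] by fastforce
    then show ?thesis using toll_zero by (simp add: toll_def)
  qed
  then have "d i = 0" for i
    using d(1) toll_zero by (cases i) (auto simp: supported_on_def)
  then show "d = (\<lambda>i. 0)" by blast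
qed

definition dual_point :: "('v,'a,'k) net \<Rightarrow> ('a \<Rightarrow> real) \<Rightarrow> 'k + 'a \<Rightarrow> real" where
  "dual_point G t = (\<lambda>i. case i of Inl k \<Rightarrow> if k \<in> comms G then min_route_cost G k t else 0
                                | Inr a \<Rightarrow> if a \<in> tolled G then t a else 0)"

lemma toll_dual_point: "toll G (dual_point G t \<circ> Inr) y = toll G t y"
  unfolding toll_def dual_point_def by (rule sum.cong) auto

lemma lp_feasible_dual_point:
  assumes inst: "pricing_instance G" and t: "nonneg_toll G t"
  shows "lp_feasible (comms G <+> tolled G) (dual_constraints G) (dual_point G t)"
  unfolding lp_feasible_dual_constraints_iff[OF inst]
proof (intro conjI ballI)
  show "supported_on (comms G <+> tolled G) (dual_point G t)"
    by (auto simp: supported_on_def dual_point_def split: sum.split)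
  show "nonneg_toll G (dual_point G t \<circ> Inr)" using t by (simp add: nonneg_toll_def dual_point_def)
  fix k y assume "k \<in> comms G" "y \<in> vertex_flows G k"
  then show "dual_point G t (Inl k) \<le> ccost G y + toll G (dual_point G t \<circ> Inr) y"
    unfolding toll_dual_point using min_route_cost_le[OF inst t] vertex_flows_subset_flows[OF inst]
    by (auto simp: dual_point_def)
qed

lemma lp_feasible_dual_le_min_route_cost:
  assumes inst: "pricing_instance G" and k: "k \<in> comms G" and "vertex_flows G k \<noteq> {}"
    and u: "lp_feasible (comms G <+> tolled G) (dual_constraints G) u"
  shows "u (Inl k) \<le> min_route_cost G k (u \<circ> Inr)"
proof -
  obtain y where "y \<in> vertex_flows G k" "min_route_cost G k (u \<circ> Inr) = ccost G y + toll G (u \<circ> Inr) y"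
    using min_route_cost_attained[OF inst] assms(3) by blast
  then show ?thesis using u k by (simp add: lp_feasible_dual_constraints_iff[OF inst])
qed

lemma min_route_cost_sum_max_attained:
  fixes G :: "('v,'a,'k) net"
  assumes inst: "pricing_instance G" and X: "\<forall>k\<in>comms G. x k \<in> flows G k"
  obtains ts where "nonneg_toll G ts"
    "\<And>t. nonneg_toll G t \<Longrightarrow>
      (\<Sum>k\<in>comms G. min_route_cost G k t) - toll G t (aggr G x)
        \<le> (\<Sum>k\<in>comms G. min_route_cost G k ts) - toll G ts (aggr G x)"
proof -
  let ?I = "comms G <+> tolled G" and ?J = "dual_constraints G" and ?w = "aggr G x"
  define p :: "'k + 'a \<Rightarrow> real" where "p = (\<lambda>i. case i of Inl k \<Rightarrow> 1 | Inr a \<Rightarrow> - ?w a)"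
  have objective: "dot_on ?I p u = (\<Sum>k\<in>comms G. u (Inl k)) - toll G (u \<circ> Inr) ?w" for u
    using finite_comms_tolled[OF inst]
    by (simp add: dot_on_Plus p_def) (simp add: dot_on_def toll_def sum_negf mult.commute)
  have vertices: "\<forall>k\<in>comms G. vertex_flows G k \<noteq> {}"
    using X vertex_flows_nonempty[OF inst] by blast
  have objective_le: "dot_on ?I p u
      \<le> (\<Sum>k\<in>comms G. min_route_cost G k (u \<circ> Inr)) - toll G (u \<circ> Inr) ?w"
    if "lp_feasible ?I ?J u" for u
    unfolding objective using lp_feasible_dual_le_min_route_cost[OF inst _ _ that] vertices
    by (simp add: sum_mono)
  have bounded: "dot_on ?I p u \<le> (\<Sum>k\<in>comms G. ccost G (x k))" if u: "lp_feasible ?I ?J u" for u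
  proof -
    have "nonneg_toll G (u \<circ> Inr)" using u by (simp add: lp_feasible_dual_constraints_iff[OF inst])
    then have "(\<Sum>k\<in>comms G. min_route_cost G k (u \<circ> Inr))
        \<le> (\<Sum>k\<in>comms G. ccost G (x k) + toll G (u \<circ> Inr) (x k))"
      using X min_route_cost_le[OF inst] by (intro sum_mono) auto
    then show ?thesis using objective_le[OF u] by (simp add: toll_aggr sum.distrib)
  qed
  have "finite ?J"
    using finite_comms_tolled[OF inst] finite_vertex_flows[OF inst]
    by (simp add: dual_constraints_def)
  moreover have "nonneg_toll G (\<lambda>a. 0)" by (simp add: nonneg_toll_def)
  ultimately obtain us where us: "lp_feasible ?I ?J us"
    and max: "\<And>v. lp_feasible ?I ?J v \<Longrightarrow> dot_on ?I p v \<le> dot_on ?I p us"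
    using lp_max_attained[OF _ lp_pointed_dual_constraints[OF inst vertices] bounded
        lp_feasible_dual_point[OF inst]] by blast
  show ?thesis
  proof (rule that)
    show "nonneg_toll G (us \<circ> Inr)" using us by (simp add: lp_feasible_dual_constraints_iff[OF inst])
    fix t assume t: "nonneg_toll G t"
    have "(\<Sum>k\<in>comms G. min_route_cost G k t) - toll G t ?w = dot_on ?I p (dual_point G t)"
      unfolding objective toll_dual_point by (simp add: dual_point_def)
    also have "\<dots> \<le> dot_on ?I p us" using max lp_feasible_dual_point[OF inst t] by blast
    also have "\<dots> \<le> (\<Sum>k\<in>comms G. min_route_cost G k (us \<circ> Inr)) - toll G (us \<circ> Inr) ?w"
      using objective_le[OF us] .
    finally show "(\<Sum>k\<in>comms G. min_route_cost G k t) - toll G t ?w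
        \<le> (\<Sum>k\<in>comms G. min_route_cost G k (us \<circ> Inr)) - toll G (us \<circ> Inr) ?w" .
  qed
qed

lemma fk_le_route_cost: "y \<in> flows G k \<Longrightarrow> fk G k t \<le> ereal (ccost G y + toll G t y)"
  by (auto simp: fk_def intro: INF_lower)

lemma ff_le_route_cost_sum:
  assumes "\<forall>k\<in>comms G. x k \<in> flows G k"
  shows "ff G t \<le> ereal (\<Sum>k\<in>comms G. ccost G (x k) + toll G t (x k))"
  unfolding ff_def sum_ereal[symmetric] using assms by (intro sum_mono fk_le_route_cost) auto

lemma ff_eq_sum_min_route_cost:
  assumes inst: "pricing_instance G" and X: "\<forall>k\<in>comms G. x k \<in> flows G k"
    and t: "nonneg_toll G t"
  shows "ff G t = ereal (\<Sum>k\<in>comms G. min_route_cost G k t)"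
  unfolding ff_def sum_ereal[symmetric] using X fk_eq_min_route_cost[OF inst t] by (intro sum.cong) auto

lemma ff_not_nonneg:
  fixes G :: "('v,'a,'k) net"
  assumes "finite (comms G)" "comms G \<noteq> {}" "\<not> nonneg_toll G t"
  shows "ff G t = -\<infinity>"
proof -
  have "(\<Sum>k\<in>A. -\<infinity>) = (-\<infinity> :: ereal)" if "finite A" "A \<noteq> {}" for A :: "'k set"
    using that by (induction A rule: finite_ne_induct) auto
  then show ?thesis using assms by (simp add: ff_def fk_def)
qed

lemma gg_aggr_le_ccost:
  assumes X: "\<forall>k\<in>comms G. x k \<in> flows G k"
  shows "gg G (aggr G x) \<le> ereal (\<Sum>k\<in>comms G. ccost G (x k))"
  unfolding gg_def
proof (rule SUP_least)
  fix t
  have "ff G t \<le> ereal ((\<Sum>k\<in>comms G. ccost G (x k)) + toll G t (aggr G x))"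
    using ff_le_route_cost_sum[OF X] by (simp add: toll_aggr sum.distrib)
  then show "ff G t - ereal (toll G t (aggr G x)) \<le> ereal (\<Sum>k\<in>comms G. ccost G (x k))"
    by (simp add: ereal_minus_le)
qed

lemma gg_aggr_attained:
  assumes inst: "pricing_instance G" and X: "\<forall>k\<in>comms G. x k \<in> flows G k"
  obtains ts where "nonneg_toll G ts" "gg G (aggr G x) = ff G ts - ereal (toll G ts (aggr G x))"
proof -
  let ?w = "aggr G x"
  obtain ts where ts: "nonneg_toll G ts" and max: "\<And>t. nonneg_toll G t \<Longrightarrow>
      (\<Sum>k\<in>comms G. min_route_cost G k t) - toll G t ?w
        \<le> (\<Sum>k\<in>comms G. min_route_cost G k ts) - toll G ts ?w"
    using min_route_cost_sum_max_attained[OF inst X] by blast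
  have "ff G t - ereal (toll G t ?w) \<le> ff G ts - ereal (toll G ts ?w)" for t
  proof (cases "nonneg_toll G t")
    case True
    then show ?thesis using max ff_eq_sum_min_route_cost[OF inst X] ts by simp
  next
    case False
    have "finite (comms G)" using finite_comms_tolled[OF inst] by simp
    then show ?thesis
      using ff_not_nonneg[OF _ _ False] by (cases "comms G = {}") (auto simp: ff_def aggr_def toll_def)
  qed
  then have "gg G ?w = ff G ts - ereal (toll G ts ?w)"
    unfolding gg_def by (intro order.antisym SUP_least SUP_upper2[of ts]) auto
  with ts that show ?thesis by blast
qed

lemma ccost_eq_gg_aggr_iff_ff:
  assumes inst: "pricing_instance G" and X: "\<forall>k\<in>comms G. x k \<in> flows G k"
  shows "ereal (\<Sum>k\<in>comms G. ccost G (x k)) = gg G (aggr G x) \<longleftrightarrow>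
    (\<exists>t. nonneg_toll G t \<and> ff G t = ereal (\<Sum>k\<in>comms G. ccost G (x k) + toll G t (x k)))"
    (is "ereal ?W = ?g \<longleftrightarrow> _")
proof
  assume W: "ereal ?W = ?g"
  obtain ts where ts: "nonneg_toll G ts" "?g = ff G ts - ereal (toll G ts (aggr G x))"
    using gg_aggr_attained[OF inst X] by blast
  then have "ff G ts = ereal (?W + toll G ts (aggr G x))"
    using W ff_eq_sum_min_route_cost[OF inst X] by auto
  then show "\<exists>t. nonneg_toll G t \<and> ff G t = ereal (\<Sum>k\<in>comms G. ccost G (x k) + toll G t (x k))"
    using ts(1) by (auto simp: toll_aggr sum.distrib)
next
  assume "\<exists>t. nonneg_toll G t \<and> ff G t = ereal (\<Sum>k\<in>comms G. ccost G (x k) + toll G t (x k))"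
  then obtain t where "ff G t = ereal (?W + toll G t (aggr G x))"
    by (auto simp: toll_aggr sum.distrib)
  then have "ff G t - ereal (toll G t (aggr G x)) = ereal ?W" by simp
  moreover have "ff G t - ereal (toll G t (aggr G x)) \<le> ?g"
    unfolding gg_def by (rule SUP_upper) simp
  ultimately show "ereal ?W = ?g" using gg_aggr_le_ccost[OF X] by simp
qed

lemma ff_eq_route_cost_sum_iff:
  assumes inst: "pricing_instance G" and X: "\<forall>k\<in>comms G. x k \<in> flows G k"
    and t: "nonneg_toll G t"
  shows "ff G t = ereal (\<Sum>k\<in>comms G. ccost G (x k) + toll G t (x k)) \<longleftrightarrow>
    (\<forall>k\<in>comms G. fk G k t = ereal (ccost G (x k) + toll G t (x k)))"
proof -
  have le: "\<forall>k\<in>comms G. min_route_cost G k t \<le> ccost G (x k) + toll G t (x k)"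
    using X min_route_cost_le[OF inst t] by blast
  have fk: "\<forall>k\<in>comms G. fk G k t = ereal (min_route_cost G k t)"
    using X fk_eq_min_route_cost[OF inst t] by blast
  have "ff G t = ereal (\<Sum>k\<in>comms G. ccost G (x k) + toll G t (x k)) \<longleftrightarrow>
      (\<forall>k\<in>comms G. min_route_cost G k t = ccost G (x k) + toll G t (x k))"
    using le sum_mono_inv[of "\<lambda>k. min_route_cost G k t" _ "\<lambda>k. ccost G (x k) + toll G t (x k)"]
      finite_comms_tolled[OF inst] ff_eq_sum_min_route_cost[OF inst X t]
    by (auto intro: sum.cong)
  then show ?thesis using fk by simp
qed

lemma indiv_bilevel_feasible_iff:
  assumes y: "y \<in> flows G k"
  shows "indiv_bilevel_feasible G k y \<longleftrightarrow> (\<exists>t. fk G k t = ereal (ccost G y + toll G t y))"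
proof -
  have "epi_neg_fk G k \<subseteq> {(t, z). z \<ge> - ccost G y - toll G t y}"
  proof clarify
    fix t z assume "(t, z) \<in> epi_neg_fk G k"
    then have "- fk G k t \<le> ereal z" by (simp add: epi_neg_fk_def)
    moreover have "- ereal (ccost G y + toll G t y) \<le> - fk G k t"
      using fk_le_route_cost[OF y] by (simp only: ereal_minus_le_minus)
    ultimately have "- ereal (ccost G y + toll G t y) \<le> ereal z" by (meson order_trans)
    then show "- ccost G y - toll G t y \<le> z" by simp
  qed
  moreover have "epi_neg_fk G k \<inter> {(t, z). z = - ccost G y - toll G t y} \<noteq> {}
      \<longleftrightarrow> (\<exists>t. (t, - ccost G y - toll G t y) \<in> epi_neg_fk G k)"
    by blast
  moreover have "(t, - ccost G y - toll G t y) \<in> epi_neg_fk G k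
      \<longleftrightarrow> ereal (ccost G y + toll G t y) \<le> fk G k t" for t
    by (simp add: epi_neg_fk_def ereal_uminus_le_reorder add.commute)
  moreover have "ereal (ccost G y + toll G t y) \<le> fk G k t \<longleftrightarrow> fk G k t = ereal (ccost G y + toll G t y)"
    for t using fk_le_route_cost[OF y, of t] by auto
  ultimately show ?thesis using y by (simp add: indiv_bilevel_feasible_def)
qed

lemma gk_eq_ccost:
  assumes y: "y \<in> flows G k" and t: "fk G k t = ereal (ccost G y + toll G t y)"
  shows "gk G k y = ereal (ccost G y)"
  unfolding gk_def
proof (rule order.antisym)
  show "(SUP t. fk G k t - ereal (toll G t y)) \<le> ereal (ccost G y)"
    using fk_le_route_cost[OF y] by (intro SUP_least) (simp add: ereal_minus_le)
  show "ereal (ccost G y) \<le> (SUP t. fk G k t - ereal (toll G t y))"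
    using t by (intro SUP_upper2[of t]) auto
qed

lemma sum_gk_eq_ccost:
  assumes X: "\<forall>k\<in>comms G. x k \<in> flows G k"
    and indiv: "\<forall>k\<in>comms G. indiv_bilevel_feasible G k (x k)"
  shows "(\<Sum>k\<in>comms G. gk G k (x k)) = ereal (\<Sum>k\<in>comms G. ccost G (x k))"
proof -
  have "gk G k (x k) = ereal (ccost G (x k))" if k: "k \<in> comms G" for k
  proof -
    have xk: "x k \<in> flows G k" using X k by blast
    then obtain t where "fk G k t = ereal (ccost G (x k) + toll G t (x k))"
      using indiv k indiv_bilevel_feasible_iff[OF xk] by blast
    then show ?thesis by (rule gk_eq_ccost[OF xk])
  qed
  then show ?thesis by simp
qed

lemma ccost_eq_gg_aggr_iff_indiv:
  assumes inst: "pricing_instance G" and X: "\<forall>k\<in>comms G. x k \<in> flows G k"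
  shows "ereal (\<Sum>k\<in>comms G. ccost G (x k)) = gg G (aggr G x) \<longleftrightarrow>
      (\<forall>k\<in>comms G. indiv_bilevel_feasible G k (x k)) \<and>
      gg G (aggr G x) = (\<Sum>k\<in>comms G. gk G k (x k))"
    (is "ereal ?W = ?g \<longleftrightarrow> _")
proof
  assume "ereal ?W = ?g"
  then obtain t where "nonneg_toll G t" "ff G t = ereal (\<Sum>k\<in>comms G. ccost G (x k) + toll G t (x k))"
    using ccost_eq_gg_aggr_iff_ff[OF inst X] by blast
  then have "\<forall>k\<in>comms G. fk G k t = ereal (ccost G (x k) + toll G t (x k))"
    using ff_eq_route_cost_sum_iff[OF inst X] by blast
  then have "\<forall>k\<in>comms G. indiv_bilevel_feasible G k (x k)"
    using X indiv_bilevel_feasible_iff by (metis (no_types, lifting))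
  with \<open>ereal ?W = ?g\<close> show "(\<forall>k\<in>comms G. indiv_bilevel_feasible G k (x k)) \<and>
      ?g = (\<Sum>k\<in>comms G. gk G k (x k))"
    using sum_gk_eq_ccost[OF X] by simp
qed (use sum_gk_eq_ccost[OF X] in simp)

theorem proposition5:
  fixes G :: "('v,'a,'k) net" and x :: "'k \<Rightarrow> 'a \<Rightarrow> real"
  assumes inst: "pricing_instance G"
    and X: "\<forall>k\<in>comms G. x k \<in> flows G k"
  shows "(bilevel_feasible G x
            \<longleftrightarrow> ereal (\<Sum>k\<in>comms G. ccost G (x k)) = gg G (aggr G x))
       \<and> (ereal (\<Sum>k\<in>comms G. ccost G (x k)) = gg G (aggr G x)
            \<longleftrightarrow> (\<forall>k\<in>comms G. indiv_bilevel_feasible G k (x k)) \<and>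
                gg G (aggr G x) = (\<Sum>k\<in>comms G. gk G k (x k)))
       \<and> ((\<forall>k\<in>comms G. indiv_bilevel_feasible G k (x k)) \<and>
                gg G (aggr G x) = (\<Sum>k\<in>comms G. gk G k (x k))
            \<longleftrightarrow> (\<exists>t. nonneg_toll G t \<and>
                   ff G t = ereal (\<Sum>k\<in>comms G. ccost G (x k) + toll G t (x k))))
       \<and> ((\<exists>t. nonneg_toll G t \<and>
                   ff G t = ereal (\<Sum>k\<in>comms G. ccost G (x k) + toll G t (x k)))
            \<longleftrightarrow> (\<exists>t. nonneg_toll G t \<and>
                   (\<forall>k\<in>comms G. fk G k t = ereal (ccost G (x k) + toll G t (x k)))))"
proof -
  have "bilevel_feasible G x \<longleftrightarrow> ereal (\<Sum>k\<in>comms G. ccost G (x k)) = gg G (aggr G x)"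
    using X by (simp add: bilevel_feasible_def)
  moreover have "(\<exists>t. nonneg_toll G t \<and>
        ff G t = ereal (\<Sum>k\<in>comms G. ccost G (x k) + toll G t (x k)))
      \<longleftrightarrow> (\<exists>t. nonneg_toll G t \<and>
        (\<forall>k\<in>comms G. fk G k t = ereal (ccost G (x k) + toll G t (x k))))"
    using ff_eq_route_cost_sum_iff[OF inst X] by blast
  ultimately show ?thesis
    using ccost_eq_gg_aggr_iff_indiv[OF inst X] ccost_eq_gg_aggr_iff_ff[OF inst X] by blast
qed

end
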